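(* Let $Q=ABCD$ be a non-degenerate convex quadrangle of perimeter $2$ with $s_1=|AB|$, $s_2=|BC|$, $s_3=|CD|$, $s_4=|DA|$. Let $B_1$ be the point lying in the same open half-plane with respect to the line $AC$ as $B$ with $|B_1A|=(s_2+s_3+s_4-s_1)/2$ and $|B_1C|=(s_1+s_3+s_4-s_2)/2$, and let $D_1$ be the point lying in the same open half-plane with respect to $AC$ as $D$ with $|D_1A|=(s_1+s_2+s_3-s_4)/2$ and $|D_1C|=(s_1+s_2+s_4-s_3)/2$. Then these points exist and the quadrangle $AB_1CD_1$ is congruent to the dual quadrangle $Q^\circ=KLMN$, via an isometry sending $K,L,M,N$ to $A,B_1,C,D_1$ respectively.
   Context: Identify $\mathbb{R}^2$ with $\mathbb{C}$. A quadrangle $Q=ABCD$ is an ordered 4-tuple of points $A,B,C,D\in\mathbb{C}$: $A$ is the first vertex and the order $A\to B\to C\to D\to A$ is the direction of traversal. Its edge vectors are $z_1=B-A$, $z_2=C-B$, $z_3=D-C$, $z_4=A-D$, so $z_1+z_2+z_3+z_4=0$; its perimeter is $|z_1|+|z_2|+|z_3|+|z_4|$. $Q$ is non-degenerate if each pair of consecutive edge vectors $(z_1,z_2),(z_2,z_3),(z_3,z_4),(z_4,z_1)$ consists of nonzero, non-collinear vectors. A non-degenerate quadrangle is convex if no two opposite edges intersect and all its interior angles are less than $\pi$. Associated plane: for a non-degenerate $Q$ of perimeter $2$, choose $u_1,\dots,u_4\in\mathbb{C}$ with $u_k^2=z_k$, where $u_1$ is an arbitrary square root of $z_1$ and for $k=1,2,3$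 the sign of $u_{k+1}$ is chosen so that $\operatorname{Im}(\overline{u_k}u_{k+1})$ has the same sign as $\operatorname{Im}(\overline{z_k}z_{k+1})$. Write $u_k=a_k+i b_k$ and $\bar a=(a_1,a_2,a_3,a_4)$, $\bar b=(b_1,b_2,b_3,b_4)$; these are orthonormal in $\mathbb{R}^4$. Let $\Pi=\operatorname{span}(\bar a,\bar b)$ and $\Pi^\perp$ its orthogonal complement. Dual quadrangle: choose an orthonormal basis $(\bar c,\bar d)$ of $\Pi^\perp$, put $w_k=(c_k+i d_k)^2$; then $\sum_k w_k=0$ and $\sum_k|w_k|=2$. The dual quadrangle $Q^\circ=KLMN$ is the quadrangle with $L-K=w_1$, $M-L=w_2$, $N-M=w_3$, $K-N=w_4$. It is determined up to rotation, reflection and translation. *)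

theory Defs
  imports "HOL-Analysis.Analysis"
begin

definition edge :: "complex \<Rightarrow> complex \<Rightarrow> complex \<Rightarrow> complex \<Rightarrow> nat \<Rightarrow> complex" where
  "edge A B C D k =
     (if k = 1 then B - A else if k = 2 then C - B else if k = 3 then D - C else A - D)"

definition nxt :: "nat \<Rightarrow> nat" where
  "nxt k = k mod 4 + 1"

definition cross :: "complex \<Rightarrow> complex \<Rightarrow> real" where
  "cross z w = Im (cnj z * w)"

definition perimeter :: "complex \<Rightarrow> complex \<Rightarrow> complex \<Rightarrow> complex \<Rightarrow> real" where
  "perimeter A B C D = (\<Sum>k\<in>{1..4}. cmod (edge A B C D k))"

definition nondegenerate :: "complex \<Rightarrow> complex \<Rightarrow> complex \<Rightarrow> complex \<Rightarrow> bool" where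
  "nondegenerate A B C D \<longleftrightarrow>
     (\<forall>k\<in>{1..4}. edge A B C D k \<noteq> 0 \<and> edge A B C D (nxt k) \<noteq> 0 \<and>
                 cross (edge A B C D k) (edge A B C D (nxt k)) \<noteq> 0)"

text \<open>twice the signed area (shoelace formula); its sign is the orientation of traversal\<close>
definition signed_area2 :: "complex \<Rightarrow> complex \<Rightarrow> complex \<Rightarrow> complex \<Rightarrow> real" where
  "signed_area2 A B C D = cross A B + cross B C + cross C D + cross D A"

text \<open>Convex: no two opposite edges intersect, and every interior angle is less than pi,
  i.e. at every vertex the polygon turns in the direction of its orientation.\<close>
definition convex_quad :: "complex \<Rightarrow> complex \<Rightarrow> complex \<Rightarrow> complex \<Rightarrow> bool" where
  "convex_quad A B C D \<longleftrightarrow> nondegenerate A B C D \<and>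
     closed_segment A B \<inter> closed_segment C D = {} \<and>
     closed_segment B C \<inter> closed_segment D A = {} \<and>
     (\<forall>k\<in>{1..4}. cross (edge A B C D k) (edge A B C D (nxt k)) * signed_area2 A B C D > 0)"

definition same_open_side :: "complex \<Rightarrow> complex \<Rightarrow> complex \<Rightarrow> complex \<Rightarrow> bool" where
  "same_open_side P Q X Y \<longleftrightarrow> cross (Q - P) (X - P) * cross (Q - P) (Y - P) > 0"

definition admissible_roots :: "complex \<Rightarrow> complex \<Rightarrow> complex \<Rightarrow> complex \<Rightarrow> (nat \<Rightarrow> complex) \<Rightarrow> bool" where
  "admissible_roots A B C D u \<longleftrightarrow>
     (\<forall>k\<in>{1..4}. (u k)\<^sup>2 = edge A B C D k) \<and>
     (\<forall>k\<in>{1..3}. sgn (cross (u k) (u (k+1))) = sgn (cross (edge A B C D k) (edge A B C D (k+1))))"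

text \<open>(c, d) is an orthonormal basis of the orthogonal complement in R^4 of the plane
  spanned by a = Re u and b = Im u (vectors indexed by 1..4).\<close>
definition dual_basis :: "(nat \<Rightarrow> complex) \<Rightarrow> (nat \<Rightarrow> real) \<Rightarrow> (nat \<Rightarrow> real) \<Rightarrow> bool" where
  "dual_basis u c d \<longleftrightarrow>
     (\<Sum>k\<in>{1..4}. c k * Re (u k)) = 0 \<and> (\<Sum>k\<in>{1..4}. c k * Im (u k)) = 0 \<and>
     (\<Sum>k\<in>{1..4}. d k * Re (u k)) = 0 \<and> (\<Sum>k\<in>{1..4}. d k * Im (u k)) = 0 \<and>
     (\<Sum>k\<in>{1..4}. c k * c k) = 1 \<and> (\<Sum>k\<in>{1..4}. d k * d k) = 1 \<and>
     (\<Sum>k\<in>{1..4}. c k * d k) = 0"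

definition dual_edge :: "(nat \<Rightarrow> real) \<Rightarrow> (nat \<Rightarrow> real) \<Rightarrow> nat \<Rightarrow> complex" where
  "dual_edge c d k = (Complex (c k) (d k))\<^sup>2"

definition dual_quad :: "complex \<Rightarrow> complex \<Rightarrow> complex \<Rightarrow> complex \<Rightarrow>
    complex \<Rightarrow> complex \<Rightarrow> complex \<Rightarrow> complex \<Rightarrow> bool" where
  "dual_quad A B C D K L M N \<longleftrightarrow>
     (\<exists>u c d. admissible_roots A B C D u \<and> dual_basis u c d \<and>
        L - K = dual_edge c d 1 \<and> M - L = dual_edge c d 2 \<and>
        N - M = dual_edge c d 3 \<and> K - N = dual_edge c d 4)"

definition isometry :: "(complex \<Rightarrow> complex) \<Rightarrow> bool" where
  "isometry f \<longleftrightarrow> (\<forall>x y. dist (f x) (f y) = dist x y)"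

end

theory Submission
  imports Defs
begin

text \<open>
  Write the edges as z_k = u_k^2 and the dual edges as w_k = v_k^2 with v_k = c_k + i d_k.
  Since the z_k sum to 0 and their lengths to 2, Re u and Im u are orthonormal in R^4, so the
  matrix with columns Re u, Im u, c, d is orthogonal and therefore also has orthonormal rows.
  Row k says |w_k| = 1 - |z_k|: for perimeter 2 the sides of the dual quadrangle are exactly
  the distances AB_1, B_1C, CD_1, D_1A. Orthogonality of two different rows says
  v_j . v_k = - u_j . u_k, which gives |w_1 + w_2| = |z_1 + z_2|, i.e. KM = AC, and
  cross(w_1, w_2) cross(w_3, w_4) = cross(z_1, z_2) cross(z_3, z_4), so that KM separates L
  from N just as, by convexity, AC separates B from D. Two quadrangles with equal diagonals and
  equal sides, each separated by its diagonal, are congruent.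
\<close>

lemma orthonormal_rows_if_orthonormal_columns:
  fixes Q :: "'i \<Rightarrow> 'i \<Rightarrow> real"
  assumes "finite I"
    and cols: "\<And>i j. i \<in> I \<Longrightarrow> j \<in> I \<Longrightarrow> (\<Sum>k\<in>I. Q k i * Q k j) = (if i = j then 1 else 0)"
    and "i \<in> I" "j \<in> I"
  shows "(\<Sum>k\<in>I. Q i k * Q j k) = (if i = j then 1 else 0)"
proof -
  define \<delta> :: "'i \<Rightarrow> 'i \<Rightarrow> real" where "\<delta> i j = (if i = j then 1 else 0)" for i j
  define R where "R i j = (\<Sum>k\<in>I. Q i k * Q j k)" for i j
  \<comment> \<open>The Frobenius norms of Q Q^T - 1 and Q^T Q - 1 coincide, and the latter is 0.\<close>
  have "(\<Sum>i\<in>I. \<Sum>j\<in>I. (R i j)\<^sup>2)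
      = (\<Sum>i\<in>I. \<Sum>j\<in>I. \<Sum>k\<in>I. \<Sum>l\<in>I. Q i k * Q i l * (Q j k * Q j l))"
    unfolding R_def power2_eq_square sum_product by (simp add: mult_ac)
  also have "\<dots> = (\<Sum>k\<in>I. \<Sum>l\<in>I. (\<Sum>i\<in>I. Q i k * Q i l) * (\<Sum>j\<in>I. Q j k * Q j l))"
    unfolding sum_product
    apply (subst (2) sum.swap, subst sum.swap, subst (4) sum.swap, subst (3) sum.swap,
        subst (2) sum.swap)
    by (rule sum.cong[OF refl], rule sum.cong[OF refl], rule sum.swap)
  also have "\<dots> = (\<Sum>k\<in>I. \<Sum>l\<in>I. \<delta> k l)"
    using cols by (auto simp: \<delta>_def intro!: sum.cong)
  finally have sum_sq: "(\<Sum>i\<in>I. \<Sum>j\<in>I. (R i j)\<^sup>2) = real (card I)"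
    using \<open>finite I\<close> by (simp add: \<delta>_def)
  have "(\<Sum>i\<in>I. R i i) = (\<Sum>k\<in>I. \<Sum>i\<in>I. Q i k * Q i k)"
    unfolding R_def by (rule sum.swap)
  then have trace: "(\<Sum>i\<in>I. R i i) = real (card I)"
    using cols by simp
  have "(R i j - \<delta> i j)\<^sup>2 = (R i j)\<^sup>2 - (if i = j then 2 * R i i else 0) + \<delta> i j" for i j
    by (simp add: \<delta>_def power2_eq_square algebra_simps)
  then have "(\<Sum>i\<in>I. \<Sum>j\<in>I. (R i j - \<delta> i j)\<^sup>2)
      = (\<Sum>i\<in>I. \<Sum>j\<in>I. (R i j)\<^sup>2) - 2 * (\<Sum>i\<in>I. R i i) + real (card I)"
    using \<open>finite I\<close> by (simp add: sum.distrib sum_subtractf sum_distrib_left \<delta>_def)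
  then have "(\<Sum>i\<in>I. \<Sum>j\<in>I. (R i j - \<delta> i j)\<^sup>2) = 0"
    using sum_sq trace by simp
  then have "(\<Sum>j'\<in>I. (R i j' - \<delta> i j')\<^sup>2) = 0"
    using \<open>finite I\<close> \<open>i \<in> I\<close> by (simp add: sum_nonneg_eq_0_iff sum_nonneg)
  then have "(R i j - \<delta> i j)\<^sup>2 = 0"
    using \<open>finite I\<close> \<open>j \<in> I\<close> by (simp add: sum_nonneg_eq_0_iff)
  then show ?thesis by (simp add: R_def \<delta>_def)
qed

section \<open>Plane geometry\<close>

lemma cross_antisym: "cross x y = - cross y x"
  by (simp add: cross_def algebra_simps)

lemma cross_self [simp]: "cross x x = 0"
  by (simp add: cross_def mult.commute)

lemma cross_scaleR_right: "cross x (r *\<^sub>R y) = r * cross x y"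
  by (simp add: cross_def scaleR_conv_of_real algebra_simps)

lemma cross_1_left: "cross 1 z = Im z"
  by (simp add: cross_def)

lemma cross_mult_left: "cross (a * x) (a * y) = (cmod a)\<^sup>2 * cross x y"
  unfolding cross_def cmod_power2 by (simp add: algebra_simps power2_eq_square)

lemma cross_mult_cnj: "cross (a * cnj x) (a * cnj y) = - (cmod a)\<^sup>2 * cross x y"
  unfolding cross_def cmod_power2 by (simp add: algebra_simps power2_eq_square)

lemma cross_power2: "cross (x\<^sup>2) (y\<^sup>2) = 2 * (x \<bullet> y) * cross x y"
  by (simp add: cross_def inner_complex_def power2_eq_square algebra_simps)

lemma cross_mult_cross: "cross a b * cross c d = (a \<bullet> c) * (b \<bullet> d) - (a \<bullet> d) * (b \<bullet> c)"
  by (simp add: cross_def inner_complex_def algebra_simps)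

lemma norm_add_power2_sq:
  "(cmod (x\<^sup>2 + y\<^sup>2))\<^sup>2 = ((cmod x)\<^sup>2 - (cmod y)\<^sup>2)\<^sup>2 + 4 * (x \<bullet> y)\<^sup>2"
  unfolding cmod_power2 inner_complex_def by (simp add: power2_eq_square algebra_simps)

lemma norm_add_less_if_cross_ne_0:
  assumes "cross x y \<noteq> 0"
  shows "cmod (x + y) < cmod x + cmod y"
proof -
  have "cmod (x + y) \<noteq> cmod x + cmod y"
  proof
    assume "cmod (x + y) = cmod x + cmod y"
    then have "cmod x *\<^sub>R y = cmod y *\<^sub>R x"
      by (simp only: norm_triangle_eq)
    then have "cmod x * cross x y = 0"
      by (metis cross_scaleR_right cross_self mult_zero_right)
    with assms show False
      by (simp add: cross_def)
  qed
  then show ?thesis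
    using norm_triangle_ineq[of x y] by linarith
qed

lemma norm_diff_less_if_cross_ne_0:
  assumes "cross x y \<noteq> 0"
  shows "\<bar>cmod x - cmod y\<bar> < cmod (x + y)"
proof -
  have "cross (x + y) (- y) \<noteq> 0" "cross (x + y) (- x) \<noteq> 0"
    using assms by (simp_all add: cross_def algebra_simps)
  from this[THEN norm_add_less_if_cross_ne_0] show ?thesis
    by (simp add: abs_less_iff)
qed

lemma eq_if_same_dists_same_side:
  assumes "P \<noteq> Q" "cmod (X - P) = cmod (Y - P)" "cmod (X - Q) = cmod (Y - Q)"
    and "cross (Q - P) (X - P) * cross (Q - P) (Y - P) > 0"
  shows "X = Y"
proof -
  define e where "e = Q - P"
  define x y where "x = (X - P) / e" and "y = (Y - P) / e"
  have e: "e \<noteq> 0" using assms(1) by (simp add: e_def)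
  have X: "X - P = e * x" and Y: "Y - P = e * y" and
    XQ: "X - Q = e * (x - 1)" and YQ: "Y - Q = e * (y - 1)"
    using e by (simp_all add: x_def y_def e_def field_simps)
  have "cmod x = cmod y" "cmod (x - 1) = cmod (y - 1)"
    using assms(2,3) e unfolding X Y XQ YQ by (simp_all add: norm_mult)
  then have "(cmod x)\<^sup>2 = (cmod y)\<^sup>2" "(cmod (x - 1))\<^sup>2 = (cmod (y - 1))\<^sup>2"
    by simp_all
  then have "Re x = Re y" "(Im x)\<^sup>2 = (Im y)\<^sup>2"
    unfolding cmod_power2 by (simp_all add: power2_eq_square algebra_simps)
  moreover have "Im x * Im y > 0"
  proof -
    have "cross (Q - P) (X - P) * cross (Q - P) (Y - P) = (cmod e)\<^sup>2 ^ 2 * (Im x * Im y)"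
      unfolding e_def[symmetric] X Y using cross_mult_left[of e 1] cross_mult_left[of e]
      by (simp add: cross_1_left power2_eq_square)
    with assms(4) show ?thesis by (simp add: zero_less_mult_iff)
  qed
  ultimately have "Im x = Im y"
    by (auto simp: power2_eq_iff)
  with \<open>Re x = Re y\<close> have "X - P = Y - P"
    unfolding X Y by (simp add: complex_eqI)
  then show ?thesis
    by simp
qed

lemma exists_point_with_dists_on_side:
  assumes "\<bar>p - q\<bar> < cmod (Q - P)" "cmod (Q - P) < p + q" "cross (Q - P) (Y - P) \<noteq> 0"
  shows "\<exists>X. same_open_side P Q X Y \<and> cmod (X - P) = p \<and> cmod (X - Q) = q"
proof -
  \<comment> \<open>X - P has coordinates (a, b) in the orthonormal frame (Q - P) / r, \<i> (Q - P) / r;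
    a comes from the law of cosines.\<close>
  define r where "r = cmod (Q - P)"
  define a where "a = (r\<^sup>2 + p\<^sup>2 - q\<^sup>2) / (2 * r)"
  define \<sigma> where "\<sigma> = sgn (cross (Q - P) (Y - P))"
  define b where "b = \<sigma> * sqrt (p\<^sup>2 - a\<^sup>2)"
  define X where "X = P + (Q - P) * Complex (a / r) (b / r)"
  have r: "r > 0" and p: "p > 0" and q: "q > 0"
    using assms(1,2) unfolding r_def[symmetric] by linarith+
  have "(2 * r * p)\<^sup>2 - (2 * r * a)\<^sup>2 = (q + p - r) * (q - p + r) * (r + p - q) * (r + p + q)"
    using r by (simp add: a_def power2_eq_square field_simps)
  also have "\<dots> > 0"
    using assms(1,2) unfolding r_def[symmetric] by (simp add: abs_less_iff)
  finally have "a\<^sup>2 < p\<^sup>2"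
    using r by (simp add: power_mult_distrib)
  moreover have "\<sigma>\<^sup>2 = 1" and \<sigma>_cross: "\<sigma> * cross (Q - P) (Y - P) > 0"
    using assms(3) by (simp_all add: \<sigma>_def sgn_if)
  ultimately have b_sq: "b\<^sup>2 = p\<^sup>2 - a\<^sup>2"
    by (simp add: b_def power_mult_distrib)
  have "b * cross (Q - P) (Y - P) = sqrt (p\<^sup>2 - a\<^sup>2) * (\<sigma> * cross (Q - P) (Y - P))"
    by (simp add: b_def)
  also have "\<dots> > 0"
    using \<open>a\<^sup>2 < p\<^sup>2\<close> \<sigma>_cross by simp
  finally have "b * cross (Q - P) (Y - P) > 0" .
  have norm_scaled: "(cmod ((Q - P) * Complex (x / r) (y / r)))\<^sup>2 = x\<^sup>2 + y\<^sup>2" for x y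
    unfolding norm_mult power_mult_distrib complex_norm r_def[symmetric]
    using r by (simp add: field_simps)
  have "(cmod (X - P))\<^sup>2 = a\<^sup>2 + b\<^sup>2"
    using norm_scaled by (simp add: X_def)
  then have dist_P: "cmod (X - P) = p"
    using b_sq p by (simp add: power2_eq_iff_nonneg)
  have "(cmod (X - Q))\<^sup>2 = (a - r)\<^sup>2 + b\<^sup>2"
  proof -
    have "X - Q = (Q - P) * Complex ((a - r) / r) (b / r)"
      using r by (simp add: X_def algebra_simps complex_eq_iff diff_divide_distrib)
    then show ?thesis
      using norm_scaled by simp
  qed
  also have "\<dots> = p\<^sup>2 - 2 * r * a + r\<^sup>2"
    by (simp add: b_sq power2_diff algebra_simps)
  also have "\<dots> = q\<^sup>2"
    using r by (simp add: a_def)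
  finally have dist_Q: "cmod (X - Q) = q"
    using q by (simp add: power2_eq_iff_nonneg)
  have "cross (Q - P) (X - P) = r * b"
    using cross_mult_left[of "Q - P" 1] r
    by (simp add: X_def cross_1_left r_def[symmetric] power2_eq_square)
  then have "same_open_side P Q X Y"
    using r \<open>b * cross (Q - P) (Y - P) > 0\<close> by (simp add: same_open_side_def mult.assoc)
  with dist_P dist_Q show ?thesis
    by blast
qed

lemma isometry_onto_segment:
  assumes "cmod (M - K) = cmod (C - A)" "M \<noteq> K" "\<epsilon> = 1 \<or> \<epsilon> = -1"
  shows "\<exists>f. isometry f \<and> f K = A \<and> f M = C \<and>
           (\<forall>z. cross (C - A) (f z - A) = \<epsilon> * cross (M - K) (z - K))"
proof -
  have "C \<noteq> A"
    using assms(1,2) by (metis norm_eq_zero right_minus_eq)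
  then have "cmod (C - A) / cmod (M - K) = 1"
    using assms(1) by simp
  from assms(3) show ?thesis
  proof
    assume "\<epsilon> = 1"
    define \<alpha> where "\<alpha> = (C - A) / (M - K)"
    define f where "f z = A + \<alpha> * (z - K)" for z
    have \<alpha>: "cmod \<alpha> = 1" and CA: "C - A = \<alpha> * (M - K)"
      using assms(2) \<open>C \<noteq> A\<close> \<open>cmod (C - A) / cmod (M - K) = 1\<close> by (simp_all add: \<alpha>_def norm_divide)
    have "isometry f"
      using \<alpha> by (simp add: isometry_def f_def dist_norm norm_mult flip: right_diff_distrib)
    moreover have "f M = C"
      by (simp add: f_def flip: CA)
    moreover have "cross (C - A) (f z - A) = cross (M - K) (z - K)" for z
      using \<alpha> by (simp add: f_def CA cross_mult_left)
    ultimately show ?thesis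
      using \<open>\<epsilon> = 1\<close> by (auto simp: f_def)
  next
    assume "\<epsilon> = -1"
    define \<beta> where "\<beta> = (C - A) / cnj (M - K)"
    define f where "f z = A + \<beta> * cnj (z - K)" for z
    have \<beta>: "cmod \<beta> = 1" and CA: "C - A = \<beta> * cnj (M - K)"
      using assms(2) \<open>C \<noteq> A\<close> \<open>cmod (C - A) / cmod (M - K) = 1\<close> by (simp_all add: \<beta>_def norm_divide flip: complex_cnj_diff)
    have "isometry f"
      using \<beta> by (simp add: isometry_def f_def dist_norm norm_mult
          flip: right_diff_distrib complex_cnj_diff)
    moreover have "f M = C"
      by (simp add: f_def flip: CA complex_cnj_diff)
    moreover have "cross (C - A) (f z - A) = - cross (M - K) (z - K)" for z
      using \<beta> by (simp add: f_def CA cross_mult_cnj flip: complex_cnj_diff)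
    ultimately show ?thesis
      using \<open>\<epsilon> = -1\<close> by (auto simp: f_def)
  qed
qed

lemma quadrangles_congruent:
  assumes "M \<noteq> K" "cmod (M - K) = cmod (C - A)"
    and "cmod (L - K) = cmod (B - A)" "cmod (L - M) = cmod (B - C)"
    and "cmod (N - K) = cmod (D - A)" "cmod (N - M) = cmod (D - C)"
    and "cross (M - K) (L - K) * cross (M - K) (N - K) < 0"
    and "cross (C - A) (B - A) * cross (C - A) (D - A) < 0"
  shows "\<exists>f. isometry f \<and> f K = A \<and> f L = B \<and> f M = C \<and> f N = D"
proof -
  define \<epsilon> :: real where
    "\<epsilon> = (if cross (M - K) (L - K) * cross (C - A) (B - A) > 0 then 1 else -1)"
  obtain f where f: "isometry f" "f K = A" "f M = C"
    and f_cross: "\<And>z. cross (C - A) (f z - A) = \<epsilon> * cross (M - K) (z - K)"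
  proof -
    have "\<epsilon> = 1 \<or> \<epsilon> = -1"
      by (simp add: \<epsilon>_def)
    with isometry_onto_segment[OF assms(2,1)] that show thesis
      by blast
  qed
  have "A \<noteq> C"
    using assms(1,2) by (metis norm_eq_zero right_minus_eq)
  have dists: "cmod (f z - A) = cmod (z - K)" "cmod (f z - C) = cmod (z - M)" for z
    using f unfolding isometry_def dist_norm by metis+
  have B_side: "cross (C - A) (f L - A) * cross (C - A) (B - A) > 0"
    using assms(7,8) by (auto simp: f_cross \<epsilon>_def zero_less_mult_iff mult_less_0_iff)
  then have D_side: "cross (C - A) (f N - A) * cross (C - A) (D - A) > 0"
    using assms(7,8) by (auto simp: f_cross \<epsilon>_def zero_less_mult_iff mult_less_0_iff)
  have "f L = B"
    by (rule eq_if_same_dists_same_side[OF \<open>A \<noteq> C\<close> _ _ B_side]) (simp_all add: dists assms(3,4))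
  moreover have "f N = D"
    by (rule eq_if_same_dists_same_side[OF \<open>A \<noteq> C\<close> _ _ D_side]) (simp_all add: dists assms(5,6))
  ultimately show ?thesis
    using f by blast
qed

section \<open>Quadrangles\<close>

lemma atLeastAtMost_1_4: "{1..4::nat} = {1, 2, 3, 4}"
  by auto

lemma edge_sum_eq_0: "(\<Sum>k\<in>{1..4}. edge A B C D k) = 0"
  unfolding atLeastAtMost_1_4 by (simp add: edge_def)

lemma perimeter_eq: "perimeter A B C D = cmod (B - A) + cmod (C - B) + cmod (D - C) + cmod (A - D)"
  unfolding perimeter_def atLeastAtMost_1_4 by (simp add: edge_def)

lemma convex_quad_cross_pos:
  assumes "convex_quad A B C D"
  shows "cross (B - A) (C - B) * cross (D - C) (A - D) > 0"
proof -
  have turn: "\<forall>k\<in>{1..4}. cross (edge A B C D k) (edge A B C D (nxt k)) * signed_area2 A B C D > 0"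
    using assms unfolding convex_quad_def by blast
  have "cross (B - A) (C - B) * signed_area2 A B C D > 0"
    using turn[rule_format, of 1] by (simp add: edge_def nxt_def)
  moreover have "cross (D - C) (A - D) * signed_area2 A B C D > 0"
    using turn[rule_format, of 3] by (simp add: edge_def nxt_def)
  ultimately show ?thesis
    by (auto simp: zero_less_mult_iff)
qed

lemma cross_diagonal:
  "cross (C - A) (B - A) * cross (C - A) (D - A) = - (cross (B - A) (C - B) * cross (D - C) (A - D))"
proof -
  have "cross (C - A) (B - A) = - cross (B - A) (C - B)" "cross (C - A) (D - A) = cross (D - C) (A - D)"
    by (simp_all add: cross_def algebra_simps)
  then show ?thesis
    by simp
qed

lemma convex_quad_diagonal_separates:
  assumes "convex_quad A B C D"
  shows "cross (C - A) (B - A) * cross (C - A) (D - A) < 0"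
  using convex_quad_cross_pos[OF assms] by (simp add: cross_diagonal)

lemma exists_apex:
  assumes "cross x y \<noteq> 0" "cross x' y' \<noteq> 0"
    and "cmod (x + y) = cmod (C - A)" "cmod (x' + y') = cmod (C - A)"
    and "cross (C - A) (Y - A) \<noteq> 0"
  shows "\<exists>X. same_open_side A C X Y \<and>
           cmod (X - A) = (cmod y + cmod x' + cmod y' - cmod x) / 2 \<and>
           cmod (X - C) = (cmod x + cmod x' + cmod y' - cmod y) / 2"
proof (rule exists_point_with_dists_on_side[OF _ _ assms(5)])
  have "(cmod y + cmod x' + cmod y' - cmod x) / 2 - (cmod x + cmod x' + cmod y' - cmod y) / 2
      = cmod y - cmod x"
    by (simp add: field_simps)
  then show "\<bar>(cmod y + cmod x' + cmod y' - cmod x) / 2 - (cmod x + cmod x' + cmod y' - cmod y) / 2\<bar>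
      < cmod (C - A)"
    using norm_diff_less_if_cross_ne_0[OF assms(1)] assms(3) by (simp add: abs_minus_commute)
  show "cmod (C - A) < (cmod y + cmod x' + cmod y' - cmod x) / 2 + (cmod x + cmod x' + cmod y' - cmod y) / 2"
    using norm_add_less_if_cross_ne_0[OF assms(2)] assms(4) by (simp add: field_simps)
qed

section \<open>The dual quadrangle\<close>

text \<open>
  The real 4 x 4 matrix with columns Re u, Im u, Re v, Im v has orthonormal rows (x \<bullet> y is the
  inner product of \<complex> = \<real>^2), i.e. span (Re u, Im u) and span (Re v, Im v) are orthogonal
  complements in \<real>^4.
\<close>

definition complementary_planes :: "(nat \<Rightarrow> complex) \<Rightarrow> (nat \<Rightarrow> complex) \<Rightarrow> bool" where
  "complementary_planes u v \<longleftrightarrow>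
     (\<forall>j\<in>{1..4}. \<forall>k\<in>{1..4}. u j \<bullet> u k + v j \<bullet> v k = (if j = k then 1 else 0))"

lemma complementary_planes_inner:
  assumes "complementary_planes u v" "j \<in> {1..4}" "k \<in> {1..4}"
  shows "v j \<bullet> v k = (if j = k then 1 else 0) - u j \<bullet> u k"
proof -
  have "u j \<bullet> u k + v j \<bullet> v k = (if j = k then 1 else 0)"
    using assms unfolding complementary_planes_def by blast
  then show ?thesis by linarith
qed

lemma complementary_planes_norm:
  assumes "complementary_planes u v" "k \<in> {1..4}"
  shows "(cmod (v k))\<^sup>2 = 1 - (cmod (u k))\<^sup>2"
  using complementary_planes_inner[OF assms assms(2)] by (simp add: power2_norm_eq_inner)

lemma complementary_planes_norm_power2:
  assumes "complementary_planes u v" "k \<in> {1..4}"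
  shows "cmod ((v k)\<^sup>2) = 1 - cmod ((u k)\<^sup>2)"
  using complementary_planes_norm[OF assms] by (simp add: norm_power)

lemma complementary_planes_norm_add_power2:
  assumes "complementary_planes u v" "j \<in> {1..4}" "k \<in> {1..4}" "j \<noteq> k"
  shows "cmod ((v j)\<^sup>2 + (v k)\<^sup>2) = cmod ((u j)\<^sup>2 + (u k)\<^sup>2)"
proof -
  have "(cmod ((v j)\<^sup>2 + (v k)\<^sup>2))\<^sup>2 = (cmod ((u j)\<^sup>2 + (u k)\<^sup>2))\<^sup>2"
    unfolding norm_add_power2_sq
    using assms by (simp add: complementary_planes_inner complementary_planes_norm power2_commute)
  then show ?thesis by (simp add: power2_eq_iff_nonneg)
qed

lemma complementary_planes_cross_power2:
  assumes "complementary_planes u v"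
  shows "cross ((v 1)\<^sup>2) ((v 2)\<^sup>2) * cross ((v 3)\<^sup>2) ((v 4)\<^sup>2)
       = cross ((u 1)\<^sup>2) ((u 2)\<^sup>2) * cross ((u 3)\<^sup>2) ((u 4)\<^sup>2)"
proof -
  have "cross ((x 1)\<^sup>2) ((x 2)\<^sup>2) * cross ((x 3)\<^sup>2) ((x 4)\<^sup>2)
      = 4 * (x 1 \<bullet> x 2) * (x 3 \<bullet> x 4) *
        ((x 1 \<bullet> x 3) * (x 2 \<bullet> x 4) - (x 1 \<bullet> x 4) * (x 2 \<bullet> x 3))" for x :: "nat \<Rightarrow> complex"
    unfolding cross_power2 cross_mult_cross[symmetric] by (simp add: mult_ac)
  \<comment> \<open>Passing from u to v flips the sign of each of the four inner products.\<close>
  then show ?thesis using assms by (simp add: complementary_planes_inner)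
qed

lemma orthonormal_Re_Im_if_sum_power2_eq_0:
  assumes "(\<Sum>k\<in>I. (u k)\<^sup>2) = 0" "(\<Sum>k\<in>I. (cmod (u k))\<^sup>2) = 2"
  shows "(\<Sum>k\<in>I. Re (u k) * Re (u k)) = 1" "(\<Sum>k\<in>I. Im (u k) * Im (u k)) = 1"
    "(\<Sum>k\<in>I. Re (u k) * Im (u k)) = 0"
proof -
  have "(\<Sum>k\<in>I. Re (u k) * Re (u k)) - (\<Sum>k\<in>I. Im (u k) * Im (u k)) = 0"
    using arg_cong[OF assms(1), of Re] by (simp add: power2_eq_square sum_subtractf)
  moreover have "(\<Sum>k\<in>I. Re (u k) * Re (u k)) + (\<Sum>k\<in>I. Im (u k) * Im (u k)) = 2"
    using assms(2) unfolding cmod_power2 by (simp add: power2_eq_square sum.distrib)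
  ultimately show "(\<Sum>k\<in>I. Re (u k) * Re (u k)) = 1" "(\<Sum>k\<in>I. Im (u k) * Im (u k)) = 1"
    by linarith+
  have "2 * (\<Sum>k\<in>I. Re (u k) * Im (u k)) = 0"
    using arg_cong[OF assms(1), of Im] by (simp add: power2_eq_square sum_distrib_left mult_ac)
  then show "(\<Sum>k\<in>I. Re (u k) * Im (u k)) = 0" by simp
qed

lemma dual_quad_complementary_planes:
  assumes "perimeter A B C D = 2" "dual_quad A B C D K L M N"
  obtains u v where "complementary_planes u v" "\<And>k. k \<in> {1..4} \<Longrightarrow> (u k)\<^sup>2 = edge A B C D k"
    "L - K = (v 1)\<^sup>2" "M - L = (v 2)\<^sup>2" "N - M = (v 3)\<^sup>2" "K - N = (v 4)\<^sup>2"
proof -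
  obtain u c d where roots: "admissible_roots A B C D u" and basis: "dual_basis u c d"
    and "L - K = dual_edge c d 1" "M - L = dual_edge c d 2"
    and "N - M = dual_edge c d 3" "K - N = dual_edge c d 4"
    using assms(2) unfolding dual_quad_def by blast
  define v where "v k = Complex (c k) (d k)" for k
  have u_sq: "(u k)\<^sup>2 = edge A B C D k" if "k \<in> {1..4}" for k
    using roots that unfolding admissible_roots_def by blast
  have "(\<Sum>k\<in>{1..4}. (u k)\<^sup>2) = 0"
    using edge_sum_eq_0 u_sq by (metis (no_types, lifting) sum.cong)
  moreover have "(\<Sum>k\<in>{1..4}. (cmod (u k))\<^sup>2) = 2"
    using assms(1) u_sq unfolding perimeter_def by (simp add: norm_power[symmetric])
  ultimately have Re_Im: "(\<Sum>k\<in>{1..4}. Re (u k) * Re (u k)) = 1" "(\<Sum>k\<in>{1..4}. Im (u k) * Im (u k)) = 1"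
    "(\<Sum>k\<in>{1..4}. Re (u k) * Im (u k)) = 0"
    by (rule orthonormal_Re_Im_if_sum_power2_eq_0)+
  define Q where "Q k j = (if j = 1 then Re (u k) else if j = 2 then Im (u k) else if j = 3 then c k else d k)"
    for k j :: nat
  have cols: "(\<Sum>k\<in>{1..4}. Q k i * Q k j) = (if i = j then 1 else 0)" if "i \<in> {1..4}" "j \<in> {1..4}" for i j
  proof -
    have "i \<in> {1, 2, 3, 4}" "j \<in> {1, 2, 3, 4}"
      using that by auto
    then show ?thesis
      using Re_Im basis unfolding dual_basis_def Q_def by (auto simp: mult.commute)
  qed
  have rows: "(\<Sum>j\<in>{1..4}. Q i j * Q k j) = (if i = k then 1 else 0)" if "i \<in> {1..4}" "k \<in> {1..4}" for i k
    using orthonormal_rows_if_orthonormal_columns[OF finite_atLeastAtMost cols that] .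
  have "u i \<bullet> u k + v i \<bullet> v k = (\<Sum>j\<in>{1..4}. Q i j * Q k j)" for i k
    unfolding atLeastAtMost_1_4 by (simp add: Q_def v_def inner_complex_def)
  then have "complementary_planes u v"
    unfolding complementary_planes_def using rows by simp
  moreover have "dual_edge c d k = (v k)\<^sup>2" for k
    unfolding dual_edge_def v_def ..
  ultimately show thesis
    using that u_sq \<open>L - K = dual_edge c d 1\<close> \<open>M - L = dual_edge c d 2\<close>
      \<open>N - M = dual_edge c d 3\<close> \<open>K - N = dual_edge c d 4\<close> by metis
qed

lemma dual_quad_congruent:
  fixes A B C D :: complex
  defines "s \<equiv> edge A B C D"
  assumes "convex_quad A B C D" "perimeter A B C D = 2"
    and "same_open_side A C B1 B" "same_open_side A C D1 D"
    and "cmod (B1 - A) = (cmod (s 2) + cmod (s 3) + cmod (s 4) - cmod (s 1)) / 2"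
    and "cmod (B1 - C) = (cmod (s 1) + cmod (s 3) + cmod (s 4) - cmod (s 2)) / 2"
    and "cmod (D1 - A) = (cmod (s 1) + cmod (s 2) + cmod (s 3) - cmod (s 4)) / 2"
    and "cmod (D1 - C) = (cmod (s 1) + cmod (s 2) + cmod (s 4) - cmod (s 3)) / 2"
    and "dual_quad A B C D K L M N"
  shows "\<exists>f. isometry f \<and> f K = A \<and> f L = B1 \<and> f M = C \<and> f N = D1"
proof -
  obtain u v where planes: "complementary_planes u v"
    and u: "\<And>k. k \<in> {1..4} \<Longrightarrow> (u k)\<^sup>2 = s k"
    and v: "L - K = (v 1)\<^sup>2" "M - L = (v 2)\<^sup>2" "N - M = (v 3)\<^sup>2" "K - N = (v 4)\<^sup>2"
    using dual_quad_complementary_planes[OF assms(3,10)] unfolding s_def by metis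
  have s: "s 1 = B - A" "s 2 = C - B" "s 3 = D - C" "s 4 = A - D"
    by (simp_all add: s_def edge_def)
  have side: "cmod ((v k)\<^sup>2) = 1 - cmod (s k)" if "k \<in> {1..4}" for k
    using complementary_planes_norm_power2[OF planes that] u[OF that] by simp
  have perimeter: "cmod (s 1) + cmod (s 2) + cmod (s 3) + cmod (s 4) = 2"
    using assms(3) unfolding s by (simp add: perimeter_eq)
  have "cmod (M - K) = cmod ((v 1)\<^sup>2 + (v 2)\<^sup>2)"
    unfolding v(1,2)[symmetric] by simp
  also have "\<dots> = cmod (s 1 + s 2)"
    using complementary_planes_norm_add_power2[OF planes, of 1 2] u by simp
  also have "\<dots> = cmod (C - A)"
    unfolding s by simp
  finally have diagonal: "cmod (M - K) = cmod (C - A)" .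
  have separates: "cross (C - A) (B - A) * cross (C - A) (D - A) < 0"
    using convex_quad_diagonal_separates[OF assms(2)] .
  then have "A \<noteq> C"
    by (auto simp: cross_def)
  have pos: "cross (s 1) (s 2) * cross (s 3) (s 4) > 0"
    using convex_quad_cross_pos[OF assms(2)] unfolding s .
  have "cross (M - K) (L - K) * cross (M - K) (N - K)
      = - (cross ((v 1)\<^sup>2) ((v 2)\<^sup>2) * cross ((v 3)\<^sup>2) ((v 4)\<^sup>2))"
    using cross_diagonal[of M K L N] by (simp only: v)
  also have "\<dots> = - (cross (s 1) (s 2) * cross (s 3) (s 4))"
    using complementary_planes_cross_power2[OF planes] u by simp
  finally have dual_sides: "cross (M - K) (L - K) * cross (M - K) (N - K) < 0"
    using pos by simp
  have sides: "cross (C - A) (B1 - A) * cross (C - A) (D1 - A) < 0"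
    using separates assms(4,5) unfolding same_open_side_def
    by (auto simp: zero_less_mult_iff mult_less_0_iff)
  show ?thesis
  proof (rule quadrangles_congruent[OF _ diagonal _ _ _ _ dual_sides sides])
    show "M \<noteq> K"
      using diagonal \<open>A \<noteq> C\<close> by auto
    show "cmod (L - K) = cmod (B1 - A)" "cmod (N - M) = cmod (D1 - C)"
      using side[of 1] side[of 3] perimeter assms(6,9) by (simp_all add: v)
    show "cmod (L - M) = cmod (B1 - C)"
      using side[of 2] perimeter assms(7) by (simp add: norm_minus_commute[of L] v)
    show "cmod (N - K) = cmod (D1 - A)"
      using side[of 4] perimeter assms(8) by (simp add: norm_minus_commute[of N] v)
  qed
qed

theorem mainTheorem14:
  fixes A B C D :: complex
  defines "s \<equiv> edge A B C D"
  assumes "convex_quad A B C D"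
    and "perimeter A B C D = 2"
  shows "(\<exists>B1. same_open_side A C B1 B \<and>
            cmod (B1 - A) = (cmod (s 2) + cmod (s 3) + cmod (s 4) - cmod (s 1)) / 2 \<and>
            cmod (B1 - C) = (cmod (s 1) + cmod (s 3) + cmod (s 4) - cmod (s 2)) / 2) \<and>
         (\<exists>D1. same_open_side A C D1 D \<and>
            cmod (D1 - A) = (cmod (s 1) + cmod (s 2) + cmod (s 3) - cmod (s 4)) / 2 \<and>
            cmod (D1 - C) = (cmod (s 1) + cmod (s 2) + cmod (s 4) - cmod (s 3)) / 2) \<and>
         (\<forall>B1 D1 K L M N.
            same_open_side A C B1 B \<and>
            cmod (B1 - A) = (cmod (s 2) + cmod (s 3) + cmod (s 4) - cmod (s 1)) / 2 \<and>
            cmod (B1 - C) = (cmod (s 1) + cmod (s 3) + cmod (s 4) - cmod (s 2)) / 2 \<and>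
            same_open_side A C D1 D \<and>
            cmod (D1 - A) = (cmod (s 1) + cmod (s 2) + cmod (s 3) - cmod (s 4)) / 2 \<and>
            cmod (D1 - C) = (cmod (s 1) + cmod (s 2) + cmod (s 4) - cmod (s 3)) / 2 \<and>
            dual_quad A B C D K L M N
            \<longrightarrow> (\<exists>f. isometry f \<and> f K = A \<and> f L = B1 \<and> f M = C \<and> f N = D1))"
proof -
  have s: "s 1 = B - A" "s 2 = C - B" "s 3 = D - C" "s 4 = A - D"
    by (simp_all add: s_def edge_def)
  have pos: "cross (s 1) (s 2) * cross (s 3) (s 4) > 0"
    using convex_quad_cross_pos[OF assms(2)] unfolding s .
  have off_diagonal: "cross (C - A) (B - A) \<noteq> 0" "cross (C - A) (D - A) \<noteq> 0"
    using convex_quad_diagonal_separates[OF assms(2)] by auto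
  have turns: "cross (s 1) (s 2) \<noteq> 0" "cross (s 3) (s 4) \<noteq> 0" "cross (s 4) (s 3) \<noteq> 0"
    using pos cross_antisym[of "s 4" "s 3"] by auto
  have diagonal: "cmod (s 1 + s 2) = cmod (C - A)" "cmod (s 3 + s 4) = cmod (C - A)"
    "cmod (s 4 + s 3) = cmod (C - A)"
    unfolding s by (simp_all add: norm_minus_commute)
  have B1: "\<exists>B1. same_open_side A C B1 B \<and>
      cmod (B1 - A) = (cmod (s 2) + cmod (s 3) + cmod (s 4) - cmod (s 1)) / 2 \<and>
      cmod (B1 - C) = (cmod (s 1) + cmod (s 3) + cmod (s 4) - cmod (s 2)) / 2"
    using exists_apex[OF turns(1,2) diagonal(1,2) off_diagonal(1)] .
  have "cmod (s 3) + cmod (s 1) + cmod (s 2) = cmod (s 1) + cmod (s 2) + cmod (s 3)"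
    "cmod (s 4) + cmod (s 1) + cmod (s 2) = cmod (s 1) + cmod (s 2) + cmod (s 4)"
    by simp_all
  then have D1: "\<exists>D1. same_open_side A C D1 D \<and>
      cmod (D1 - A) = (cmod (s 1) + cmod (s 2) + cmod (s 3) - cmod (s 4)) / 2 \<and>
      cmod (D1 - C) = (cmod (s 1) + cmod (s 2) + cmod (s 4) - cmod (s 3)) / 2"
    using exists_apex[OF turns(3,1) diagonal(3,1) off_diagonal(2)] by (simp only:)
  show ?thesis
    using B1 D1 dual_quad_congruent[OF assms(2,3)] unfolding s_def by blast
qed

end
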